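(* Let $G$ be an interval graph and let $[C_1,\ldots,C_t]$ be a consecutive clique arrangement of $G$. For a vertex $v$ let $r(v)=\max\{i : v\in C_i\}$, and order the vertices of $C_1$ by nondecreasing $r(v)$ (ties broken arbitrarily). Then there exists a triangle packing of $G$ of maximum cardinality in which every vertex of $C_1$ is covered by some triangle, except possibly the first vertex, or the first two vertices, of $C_1$ in this ordering; that is, the set of uncovered vertices of $C_1$ is an initial segment of the ordering of length at most $2$.
   Context: A graph is an interval graph if it is the intersection graph of a finite collection of intervals on the real line. A consecutive clique arrangement of a graph $G$ is a linear ordering $[C_1,\ldots,C_t]$ of all maximal cliques of $G$ such that for each vertex $v$, the cliques containing $v$ are consecutive in the ordering. A triangle packing is a collection of pairwise vertex-disjoint triangles; a vertex is covered if it lies in one of these triangles. *)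

theory Defs
  imports Complex_Main
begin

definition simple_graph :: "'a set \<Rightarrow> ('a \<Rightarrow> 'a \<Rightarrow> bool) \<Rightarrow> bool" where
  "simple_graph V E \<longleftrightarrow> finite V \<and> (\<forall>u v. E u v \<longrightarrow> u \<in> V \<and> v \<in> V)
     \<and> (\<forall>u v. E u v \<longrightarrow> E v u) \<and> (\<forall>v. \<not> E v v)"

definition interval_graph :: "'a set \<Rightarrow> ('a \<Rightarrow> 'a \<Rightarrow> bool) \<Rightarrow> bool" where
  "interval_graph V E \<longleftrightarrow> simple_graph V E \<and>
     (\<exists>l r :: 'a \<Rightarrow> real. (\<forall>v\<in>V. l v \<le> r v) \<and>
        (\<forall>u\<in>V. \<forall>v\<in>V. u \<noteq> v \<longrightarrow> (E u v \<longleftrightarrow> {l u..r u} \<inter> {l v..r v} \<noteq> {})))"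

definition is_clique :: "'a set \<Rightarrow> ('a \<Rightarrow> 'a \<Rightarrow> bool) \<Rightarrow> 'a set \<Rightarrow> bool" where
  "is_clique V E K \<longleftrightarrow> K \<subseteq> V \<and> (\<forall>u\<in>K. \<forall>v\<in>K. u \<noteq> v \<longrightarrow> E u v)"

definition maximal_clique :: "'a set \<Rightarrow> ('a \<Rightarrow> 'a \<Rightarrow> bool) \<Rightarrow> 'a set \<Rightarrow> bool" where
  "maximal_clique V E K \<longleftrightarrow> is_clique V E K \<and> (\<forall>K'. is_clique V E K' \<and> K \<subseteq> K' \<longrightarrow> K' = K)"

text \<open>Consecutive clique arrangement: a list [C_1,...,C_t] (indices 0..t-1 here)
listing every maximal clique exactly once such that for each vertex the cliques
containing it are consecutive.\<close>

definition consecutive_clique_arrangement ::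
    "'a set \<Rightarrow> ('a \<Rightarrow> 'a \<Rightarrow> bool) \<Rightarrow> 'a set list \<Rightarrow> bool" where
  "consecutive_clique_arrangement V E Cs \<longleftrightarrow>
     distinct Cs \<and> set Cs = {K. maximal_clique V E K} \<and>
     (\<forall>v \<in> V. \<forall>i j k. i \<le> j \<and> j \<le> k \<and> k < length Cs \<and> v \<in> Cs ! i \<and> v \<in> Cs ! k
        \<longrightarrow> v \<in> Cs ! j)"

definition last_clique :: "'a set list \<Rightarrow> 'a \<Rightarrow> nat" where
  "last_clique Cs v = Max {i. i < length Cs \<and> v \<in> Cs ! i}"

definition is_triangle :: "'a set \<Rightarrow> ('a \<Rightarrow> 'a \<Rightarrow> bool) \<Rightarrow> 'a set \<Rightarrow> bool" where
  "is_triangle V E T \<longleftrightarrow> card T = 3 \<and> is_clique V E T"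

definition triangle_packing :: "'a set \<Rightarrow> ('a \<Rightarrow> 'a \<Rightarrow> bool) \<Rightarrow> 'a set set \<Rightarrow> bool" where
  "triangle_packing V E P \<longleftrightarrow> (\<forall>T\<in>P. is_triangle V E T) \<and>
     (\<forall>T\<in>P. \<forall>T'\<in>P. T \<noteq> T' \<longrightarrow> T \<inter> T' = {})"

definition max_triangle_packing :: "'a set \<Rightarrow> ('a \<Rightarrow> 'a \<Rightarrow> bool) \<Rightarrow> 'a set set \<Rightarrow> bool" where
  "max_triangle_packing V E P \<longleftrightarrow> triangle_packing V E P \<and>
     (\<forall>Q. triangle_packing V E Q \<longrightarrow> card Q \<le> card P)"

definition covered :: "'a set set \<Rightarrow> 'a set" where
  "covered P = \<Union>P"

end

theory Submission
  imports Defs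
begin

(* Let C_1 be the first clique of the arrangement, listed as ord.
   (1) Consecutiveness makes the neighbourhoods of C_1-vertices nested: if
       r(u) <= r(v) then every neighbour of u other than v is a neighbour of v.
   (2) Hence, in any triangle packing, a covered vertex ord!i may be exchanged
       against an uncovered later vertex ord!j (i < j) without changing the
       number of triangles.
   (3) Among all maximum packings pick one maximizing the sum of the indices of
       the covered vertices of ord.  By (2) its uncovered vertices of ord form an
       initial segment; since C_1 is a clique, a maximum packing leaves at most
       two of its vertices uncovered (three would form a new triangle). *)

text \<open>In a finite graph every clique extends to a maximal one (take a clique of
  largest cardinality containing it).\<close>

lemma maximal_clique_exists:
  assumes sg: "simple_graph V E" and K0: "is_clique V E K0"
  shows "\<exists>K. maximal_clique V E K \<and> K0 \<subseteq> K"
proof -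
  have fin: "finite V" using sg by (simp add: simple_graph_def)
  have "\<exists>K. (is_clique V E K \<and> K0 \<subseteq> K) \<and>
          (\<forall>K'. is_clique V E K' \<and> K0 \<subseteq> K' \<longrightarrow> card K' \<le> card K)"
    by (rule ex_has_greatest_nat[where k=K0 and b="Suc (card V)"])
       (use K0 fin in \<open>auto simp: is_clique_def intro: card_mono le_imp_less_Suc\<close>)
  then obtain K where K: "is_clique V E K" "K0 \<subseteq> K"
    and largest: "\<And>K'. is_clique V E K' \<Longrightarrow> K0 \<subseteq> K' \<Longrightarrow> card K' \<le> card K" by blast
  have "maximal_clique V E K"
    unfolding maximal_clique_def
  proof (intro conjI allI impI)
    fix K' assume K': "is_clique V E K' \<and> K \<subseteq> K'"
    hence "finite K'" using fin by (meson finite_subset is_clique_def)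
    moreover have "card K' \<le> card K" using largest K' K by blast
    ultimately show "K' = K" using K' by (metis card_subset_eq card_mono le_antisym)
  qed (use K in auto)
  thus ?thesis using K by blast
qed

lemma first_clique_maximal:
  assumes "consecutive_clique_arrangement V E Cs" and "Cs \<noteq> []"
  shows "maximal_clique V E (Cs ! 0)"
proof -
  have "Cs ! 0 \<in> set Cs" using assms(2) by simp
  thus ?thesis using assms(1) by (simp add: consecutive_clique_arrangement_def)
qed

text \<open>Nested neighbourhoods in the first clique of a consecutive clique arrangement:
  an edge uw lies in some maximal clique C_i with i \<le> r(u) \<le> r(v); as v also lies
  in C_1 and C_{r(v)}, consecutiveness puts v into C_i, so v = w or v is adjacent to w.\<close>

lemma first_clique_neighbours_nested:
  assumes sg: "simple_graph V E" and cca: "consecutive_clique_arrangement V E Cs"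
    and ne: "Cs \<noteq> []"
    and u: "u \<in> Cs ! 0" and v: "v \<in> Cs ! 0"
    and r: "last_clique Cs u \<le> last_clique Cs v"
    and uw: "E u w"
  shows "w = v \<or> E v w"
proof -
  have "is_clique V E {u, w}" using sg uw by (auto simp: is_clique_def simple_graph_def)
  then obtain K where K: "maximal_clique V E K" "{u, w} \<subseteq> K"
    using maximal_clique_exists sg by blast
  hence "K \<in> set Cs" using cca by (simp add: consecutive_clique_arrangement_def)
  then obtain i where i: "i < length Cs" "Cs ! i = K" by (auto simp: in_set_conv_nth)
  have vV: "v \<in> V" using first_clique_maximal[OF cca ne] v
    by (auto simp: maximal_clique_def is_clique_def)
  have "i \<le> last_clique Cs u" unfolding last_clique_def using i K by (intro Max_ge) auto
  hence i_le: "i \<le> last_clique Cs v" using r by simp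
  have "last_clique Cs v \<in> {i. i < length Cs \<and> v \<in> Cs ! i}"
    unfolding last_clique_def using ne v by (intro Max_in) auto
  hence "v \<in> K"
    using cca vV i_le i v unfolding consecutive_clique_arrangement_def by (metis le0 mem_Collect_eq)
  thus ?thesis using K by (auto simp: maximal_clique_def is_clique_def)
qed

lemma triangle_packing_finite:
  assumes "simple_graph V E" "triangle_packing V E P"
  shows "finite P"
proof -
  have "P \<subseteq> Pow V" using assms(2)
    by (auto simp: triangle_packing_def is_triangle_def is_clique_def)
  thus ?thesis using assms(1) by (meson finite_Pow_iff finite_subset simple_graph_def)
qed

text \<open>Maximum packings exist: packings are subsets of Pow V, so their sizes are bounded.\<close>

lemma max_triangle_packing_exists:
  assumes sg: "simple_graph V E"
  shows "\<exists>P. max_triangle_packing V E P"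
proof -
  have "finite V" using sg by (simp add: simple_graph_def)
  hence "\<forall>Q. triangle_packing V E Q \<longrightarrow> card Q < Suc (card (Pow V))"
    by (auto simp: triangle_packing_def is_triangle_def is_clique_def
             intro!: le_imp_less_Suc card_mono)
  hence "\<exists>P. triangle_packing V E P \<and> (\<forall>Q. triangle_packing V E Q \<longrightarrow> card Q \<le> card P)"
    by (intro ex_has_greatest_nat[where k="{}"]) (auto simp: triangle_packing_def)
  thus ?thesis by (simp add: max_triangle_packing_def)
qed

text \<open>A maximum packing leaves at most two vertices of any clique uncovered:
  three uncovered clique vertices would form an additional disjoint triangle.\<close>

lemma max_packing_clique_uncovered:
  assumes sg: "simple_graph V E" and P: "max_triangle_packing V E P"
    and K: "is_clique V E K"
  shows "card (K - \<Union>P) \<le> 2"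
proof (rule ccontr)
  assume "\<not> card (K - \<Union>P) \<le> 2"
  then obtain T where T: "T \<subseteq> K - \<Union>P" "card T = 3"
    by (metis obtain_subset_with_card_n not_le Suc_leI numeral_3_eq_3 numeral_2_eq_2)
  have tp: "triangle_packing V E P" using P by (simp add: max_triangle_packing_def)
  have TK: "T \<subseteq> K" and T_uncovered: "T \<inter> \<Union>P = {}" using T(1) by auto
  have "is_triangle V E T" using TK K T(2) unfolding is_triangle_def is_clique_def by blast
  moreover have "T \<notin> P"
  proof
    assume "T \<in> P"
    hence "T = {}" using T_uncovered by blast
    thus False using T(2) by simp
  qed
  ultimately have "triangle_packing V E (insert T P)" using tp T_uncovered
    unfolding triangle_packing_def by auto
  hence "card (insert T P) \<le> card P" using P by (simp add: max_triangle_packing_def)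
  thus False using \<open>T \<notin> P\<close> triangle_packing_finite[OF sg tp] by simp
qed

lemma exchange_triangle:
  assumes sg: "simple_graph V E" and T: "is_triangle V E T"
    and a: "a \<in> T" and b: "b \<notin> T" "b \<in> V"
    and nested: "\<And>w. E a w \<Longrightarrow> w = b \<or> E b w"
  shows "is_triangle V E (insert b (T - {a}))"
proof -
  have "finite T" using T unfolding is_triangle_def by (intro card_ge_0_finite) simp
  hence card: "card (insert b (T - {a})) = 3"
    using T a b by (simp add: is_triangle_def card_Diff_singleton)
  have edges: "\<And>x y. x \<in> T \<Longrightarrow> y \<in> T \<Longrightarrow> x \<noteq> y \<Longrightarrow> E x y" and "T \<subseteq> V"
    using T by (auto simp: is_triangle_def is_clique_def)
  have sym: "\<And>x y. E x y \<Longrightarrow> E y x" using sg by (simp add: simple_graph_def)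
  have "E b x" if "x \<in> T" "x \<noteq> a" for x
    using nested[OF edges[OF a that(1)]] that b by auto
  hence "is_clique V E (insert b (T - {a}))"
    using edges sym \<open>T \<subseteq> V\<close> b by (auto simp: is_clique_def)
  thus ?thesis using card by (simp add: is_triangle_def)
qed

lemma exchange_in_packing:
  assumes sg: "simple_graph V E" and tp: "triangle_packing V E P"
    and T: "T \<in> P" and a: "a \<in> T" and b: "b \<notin> \<Union>P" "b \<in> V"
    and nested: "\<And>w. E a w \<Longrightarrow> w = b \<or> E b w"
  defines "P' \<equiv> insert (insert b (T - {a})) (P - {T})"
  shows "triangle_packing V E P'" "card P' = card P" "\<Union>P' = insert b (\<Union>P - {a})"
proof -
  have disj: "\<And>T'. T' \<in> P \<Longrightarrow> T' \<noteq> T \<Longrightarrow> T' \<inter> T = {}"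
    using tp T by (simp add: triangle_packing_def)
  have new: "is_triangle V E (insert b (T - {a}))"
    using exchange_triangle[OF sg _ a _ b(2) nested] tp T b by (auto simp: triangle_packing_def)
  have new_disj: "insert b (T - {a}) \<inter> T' = {}" if "T' \<in> P - {T}" for T'
    using disj[of T'] that b by auto
  show "triangle_packing V E P'"
    using tp new new_disj unfolding P'_def triangle_packing_def by (auto simp: Int_commute)
  have "insert b (T - {a}) \<notin> P - {T}" using b by blast
  thus "card P' = card P"
    using triangle_packing_finite[OF sg tp] T unfolding P'_def
    by (simp add: card_Diff_singleton) (metis Suc_pred card_gt_0_iff empty_iff)
  show "\<Union>P' = insert b (\<Union>P - {a})" unfolding P'_def using disj a T by blast
qed

lemma downward_closed_indices_take:
  assumes I: "I \<subseteq> {..<length xs}" and down: "\<And>i j. j \<in> I \<Longrightarrow> i < j \<Longrightarrow> i \<in> I"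
  shows "(!) xs ` I = set (take (card I) xs)"
proof -
  have fin: "finite I" using I finite_subset by blast
  have "I = {0..<card I}"
  proof (cases "I = {}")
    case False
    have "Max I \<in> I" using fin False by simp
    hence "I = {0..<Suc (Max I)}"
      using fin down by (auto simp: less_Suc_eq_le le_less dest: Max_ge)
    thus ?thesis by (metis card_atLeastLessThan diff_zero)
  qed simp
  moreover have "card I \<le> length xs" using card_mono[OF _ I] by simp
  ultimately show ?thesis using nth_image by metis
qed

definition nested_neighbourhoods :: "('a \<Rightarrow> 'a \<Rightarrow> bool) \<Rightarrow> 'a list \<Rightarrow> bool" where
  "nested_neighbourhoods E xs \<longleftrightarrow>
     (\<forall>i j w. i \<le> j \<and> j < length xs \<and> E (xs ! i) w \<longrightarrow> w = xs ! j \<or> E (xs ! j) w)"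

definition cover_weight :: "'a list \<Rightarrow> 'a set set \<Rightarrow> nat" where
  "cover_weight xs P = (\<Sum>i \<in> {i. i < length xs \<and> xs ! i \<in> \<Union>P}. i)"

lemma cover_weight_bound: "cover_weight xs P < Suc (\<Sum>i<length xs. i)"
  unfolding cover_weight_def by (simp add: le_imp_less_Suc sum_mono2 subset_iff)

lemma exchange_increases_weight:
  assumes sg: "simple_graph V E" and P: "max_triangle_packing V E P"
    and dist: "distinct xs" and xsV: "set xs \<subseteq> V"
    and nested: "nested_neighbourhoods E xs"
    and ij: "i < j" "j < length xs"
    and covered_i: "xs ! i \<in> \<Union>P" and uncovered_j: "xs ! j \<notin> \<Union>P"
  shows "\<exists>P'. max_triangle_packing V E P' \<and> cover_weight xs P < cover_weight xs P'"
proof -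
  have tp: "triangle_packing V E P" using P by (simp add: max_triangle_packing_def)
  obtain T where T: "T \<in> P" "xs ! i \<in> T" using covered_i by blast
  have xj: "xs ! j \<in> V" using xsV ij by auto
  have nested_ij: "\<And>w. E (xs ! i) w \<Longrightarrow> w = xs ! j \<or> E (xs ! j) w"
    using nested ij unfolding nested_neighbourhoods_def by (meson less_imp_le)
  note ex = exchange_in_packing[OF sg tp T uncovered_j xj nested_ij]
  define P' where "P' = insert (insert (xs ! j) (T - {xs ! i})) (P - {T})"
  have "max_triangle_packing V E P'"
    using ex(1,2) P ij unfolding P'_def by (simp add: max_triangle_packing_def)
  define S where "S = {k. k < length xs \<and> xs ! k \<in> \<Union>P}"
  have idx: "\<And>k. k < length xs \<Longrightarrow> xs ! k = xs ! i \<longleftrightarrow> k = i"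
        "\<And>k. k < length xs \<Longrightarrow> xs ! k = xs ! j \<longleftrightarrow> k = j"
    using dist ij by (simp_all add: nth_eq_iff_index_eq)
  have S': "{k. k < length xs \<and> xs ! k \<in> \<Union>P'} = insert j (S - {i})"
    using ex(3) idx ij uncovered_j unfolding P'_def S_def by auto
  have "i \<in> S" "j \<notin> S" "finite S" using ij covered_i uncovered_j by (auto simp: S_def)
  hence "cover_weight xs P = i + sum id (S - {i})" "cover_weight xs P' = j + sum id (S - {i})"
    using sum.remove[of S i id] unfolding cover_weight_def S' S_def[symmetric] by auto
  thus ?thesis using \<open>max_triangle_packing V E P'\<close> ij by auto
qed

lemma nested_clique_packing:
  assumes sg: "simple_graph V E" and K: "is_clique V E (set xs)" and dist: "distinct xs"
    and nested: "nested_neighbourhoods E xs"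
  shows "\<exists>P. max_triangle_packing V E P \<and> (\<exists>k \<le> 2. set xs - covered P = set (take k xs))"
proof -
  obtain P0 where "max_triangle_packing V E P0" using max_triangle_packing_exists[OF sg] by blast
  hence "\<exists>P. max_triangle_packing V E P \<and>
           (\<forall>Q. max_triangle_packing V E Q \<longrightarrow> cover_weight xs Q \<le> cover_weight xs P)"
    by (intro ex_has_greatest_nat[where k=P0 and b="Suc (\<Sum>i<length xs. i)"])
       (auto simp: cover_weight_bound)
  then obtain P where P: "max_triangle_packing V E P"
    and heaviest: "\<And>Q. max_triangle_packing V E Q \<Longrightarrow> cover_weight xs Q \<le> cover_weight xs P"
    by blast
  define I where "I = {i. i < length xs \<and> xs ! i \<notin> \<Union>P}"
  have down: "i \<in> I" if j: "j \<in> I" and ij: "i < j" for i j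
  proof (rule ccontr)
    assume "i \<notin> I"
    hence covered_i: "xs ! i \<in> \<Union>P" using j ij by (auto simp: I_def)
    have j_len: "j < length xs" and uncovered_j: "xs ! j \<notin> \<Union>P" using j by (auto simp: I_def)
    have xsV: "set xs \<subseteq> V" using K by (simp add: is_clique_def)
    obtain P' where "max_triangle_packing V E P'" "cover_weight xs P < cover_weight xs P'"
      using exchange_increases_weight[OF sg P dist xsV nested ij j_len covered_i uncovered_j] by blast
    thus False using heaviest leD by blast
  qed
  have uncovered: "set xs - covered P = (!) xs ` I"
    unfolding covered_def I_def by (auto simp: in_set_conv_nth)
  have "inj_on ((!) xs) I" using dist by (auto simp: I_def inj_on_def nth_eq_iff_index_eq)
  hence "card ((!) xs ` I) = card I" by (rule card_image)
  hence "card I \<le> 2"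
    using max_packing_clique_uncovered[OF sg P K] uncovered by (simp add: covered_def)
  moreover have "(!) xs ` I = set (take (card I) xs)"
  proof (rule downward_closed_indices_take)
    show "I \<subseteq> {..<length xs}" by (auto simp: I_def)
  qed (blast intro: down)
  ultimately show ?thesis using P uncovered by auto
qed

lemma first_clique_sorted_nested:
  assumes sg: "simple_graph V E" and cca: "consecutive_clique_arrangement V E Cs"
    and ne: "Cs \<noteq> []" and ord: "set ord = Cs ! 0"
    and sorted: "sorted (map (last_clique Cs) ord)"
  shows "nested_neighbourhoods E ord"
  unfolding nested_neighbourhoods_def
proof (intro allI impI)
  fix i j w assume "i \<le> j \<and> j < length ord \<and> E (ord ! i) w"
  hence ij: "i \<le> j" "j < length ord" and edge: "E (ord ! i) w" by auto
  have "ord ! i \<in> Cs ! 0" "ord ! j \<in> Cs ! 0" using ij ord nth_mem by auto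
  moreover have "last_clique Cs (ord ! i) \<le> last_clique Cs (ord ! j)"
    using sorted_nth_mono[OF sorted, of i j] ij by simp
  ultimately show "w = ord ! j \<or> E (ord ! j) w"
    using first_clique_neighbours_nested[OF sg cca ne _ _ _ edge] by blast
qed

theorem mainTheorem3:
  fixes V :: "'a set" and E :: "'a \<Rightarrow> 'a \<Rightarrow> bool"
    and Cs :: "'a set list" and ord :: "'a list"
  assumes "interval_graph V E"
    and "consecutive_clique_arrangement V E Cs"
    and "distinct ord" and "set ord = Cs ! 0"
    and "sorted (map (last_clique Cs) ord)"
  shows "\<exists>P. max_triangle_packing V E P \<and>
           (\<exists>k \<le> 2. Cs ! 0 - covered P = set (take k ord))"
proof -
  have sg: "simple_graph V E" using assms(1) by (simp add: interval_graph_def)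
  (* the arrangement is nonempty: the empty clique extends to a maximal one *)
  obtain K where "maximal_clique V E K"
    using maximal_clique_exists[OF sg, of "{}"] by (auto simp: is_clique_def)
  hence ne: "Cs \<noteq> []" using assms(2) by (auto simp: consecutive_clique_arrangement_def)
  have clique: "is_clique V E (set ord)"
    using first_clique_maximal[OF assms(2) ne] assms(4) by (simp add: maximal_clique_def)
  have nested: "nested_neighbourhoods E ord"
    using first_clique_sorted_nested[OF sg assms(2) ne assms(4,5)] .
  show ?thesis using nested_clique_packing[OF sg clique assms(3) nested] assms(4) by simp
qed

end
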